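(* Let $\Gamma=\Gamma_1+\cdots+\Gamma_n$ be the disjoint union of labeled graphs $\Gamma_i$ with $V_i$ vertices, $\Gamma_i\neq\Gamma_j$ for $i\neq j$, where $\Gamma$ has $V=V_1+\cdots+V_n$ vertices labeled so that the vertices of $\Gamma_1$ come first, then those of $\Gamma_2$, etc., each block keeping its internal order. Then $$c_\Gamma=\frac{V!}{V_1!\cdots V_n!}\,c_{\Gamma_1}\cdots c_{\Gamma_n}.$$
   Context: A labeled graph with $V$ vertices and $E$ edges is a map $s:\{1,\ldots,E\}\to\mathcal{P}_2\{1,\ldots,V\}$. Each edge with $s(e)=\{i,j\}$, $i<j$, is oriented $i\to j$. Define $c_\Gamma:=\sum_{\sigma\in S_V}\prod_{e:\,i\to j}\operatorname{sign}(\sigma(j)-\sigma(i))$. *)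

theory Defs
  imports Complex_Main "HOL-Combinatorics.Permutations"
begin

text \<open>A labeled graph with V vertices and E edges is represented as the pair
  (V, es) where es is the list of its edges (edge number e is es ! (e-1)),
  each edge being a 2-element subset of {1..V}.\<close>

type_synonym lgraph = "nat \<times> nat set list"

definition nverts :: "lgraph \<Rightarrow> nat" where
  "nverts G = fst G"

definition edges :: "lgraph \<Rightarrow> nat set list" where
  "edges G = snd G"

definition wf_lgraph :: "lgraph \<Rightarrow> bool" where
  "wf_lgraph G \<longleftrightarrow> (\<forall>e\<in>set (edges G). card e = 2 \<and> e \<subseteq> {1..nverts G})"

text \<open>Edge {i,j} with i<j is oriented i -> j; contributes sign(sigma j - sigma i).\<close>
definition edge_sign :: "(nat \<Rightarrow> nat) \<Rightarrow> nat set \<Rightarrow> int" where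
  "edge_sign \<sigma> e = sgn (int (\<sigma> (Max e)) - int (\<sigma> (Min e)))"

definition cG :: "lgraph \<Rightarrow> int" where
  "cG G = (\<Sum>\<sigma> \<in> {\<sigma>. \<sigma> permutes {1..nverts G}}.
              prod_list (map (edge_sign \<sigma>) (edges G)))"

fun dunion :: "lgraph list \<Rightarrow> lgraph" where
  "dunion [] = (0, [])"
| "dunion (G # Gs) =
     (nverts G + nverts (dunion Gs),
      edges G @ map (\<lambda>e. (\<lambda>v. v + nverts G) ` e) (edges (dunion Gs)))"

end

theory Submission
  imports Defs "HOL-Library.FuncSet" "HOL-Library.Infinite_Set"
begin

text \<open>Write \<open>\<Gamma> = \<Gamma>\<^sub>1 + \<Gamma>'\<close> with \<open>\<Gamma>' = \<Gamma>\<^sub>2 + \<cdots> + \<Gamma>\<^sub>n\<close>. A bijection from the vertices of \<open>\<Gamma>\<close>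
  onto \<open>{1..V}\<close> amounts to the set \<open>S\<close> of positions taken by \<open>\<Gamma>\<^sub>1\<close> together with bijections of
  \<open>\<Gamma>\<^sub>1\<close> onto \<open>S\<close> and of \<open>\<Gamma>'\<close> onto the complement of \<open>S\<close>. The sign of an edge only sees the
  relative order of the positions of its ends, so relabelling positions or vertices monotonically
  changes nothing, and each of the \<open>V choose V\<^sub>1\<close> choices of \<open>S\<close> contributes \<open>c\<^sub>\<Gamma>\<^sub>1 \<cdot> c\<^sub>\<Gamma>'\<close>.
  Induction on \<open>n\<close> gives the multinomial coefficient.\<close>

definition edges_on :: "nat set list \<Rightarrow> nat set \<Rightarrow> bool" where
  "edges_on E A \<longleftrightarrow> (\<forall>e\<in>set E. finite e \<and> e \<noteq> {} \<and> e \<subseteq> A)"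

definition sign_prod :: "(nat \<Rightarrow> nat) \<Rightarrow> nat set list \<Rightarrow> int" where
  "sign_prod \<sigma> E = prod_list (map (edge_sign \<sigma>) E)"

text \<open>Bijections are taken extensional, so that \<open>bijections A T\<close> is finite for finite \<open>A\<close> and \<open>T\<close>.\<close>

definition bijections :: "'a set \<Rightarrow> 'b set \<Rightarrow> ('a \<Rightarrow> 'b) set" where
  "bijections A T = {\<sigma> \<in> A \<rightarrow>\<^sub>E T. bij_betw \<sigma> A T}"

definition sign_sum :: "nat set list \<Rightarrow> nat set \<Rightarrow> nat set \<Rightarrow> int" where
  "sign_sum E A T = (\<Sum>\<sigma>\<in>bijections A T. sign_prod \<sigma> E)"

lemma finite_bijections: "finite A \<Longrightarrow> finite T \<Longrightarrow> finite (bijections A T)"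
  unfolding bijections_def by (rule finite_subset[OF _ finite_PiE[of A "\<lambda>_. T"]]) auto

lemma bijections_compose_left:
  assumes "bij_betw h T T'"
  shows "bij_betw (\<lambda>\<sigma>. compose A h \<sigma>) (bijections A T) (bijections A T')"
proof (rule bij_betwI[where g = "\<lambda>\<tau>. compose A (inv_into T h) \<tau>"])
  have h_inv: "bij_betw (inv_into T h) T' T"
    using assms by (rule bij_betw_inv_into)
  show "(\<lambda>\<sigma>. compose A h \<sigma>) \<in> bijections A T \<rightarrow> bijections A T'"
    using assms by (auto simp: bijections_def intro: bij_betw_compose) (auto simp: compose_def bij_betwE)
  show "(\<lambda>\<tau>. compose A (inv_into T h) \<tau>) \<in> bijections A T' \<rightarrow> bijections A T"
    using h_inv by (auto simp: bijections_def intro: bij_betw_compose) (auto simp: compose_def bij_betwE)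
  show "compose A (inv_into T h) (compose A h \<sigma>) = \<sigma>" if "\<sigma> \<in> bijections A T" for \<sigma>
    using that assms
    by (auto simp: bijections_def compose_def bij_betw_inv_into_left fun_eq_iff PiE_def extensional_def
        Pi_iff)
  show "compose A h (compose A (inv_into T h) \<tau>) = \<tau>" if "\<tau> \<in> bijections A T'" for \<tau>
    using that assms
    by (auto simp: bijections_def compose_def bij_betw_inv_into_right fun_eq_iff PiE_def extensional_def
        Pi_iff)
qed

lemma bijections_compose_right:
  assumes "bij_betw h A' A"
  shows "bij_betw (\<lambda>\<sigma>. compose A' \<sigma> h) (bijections A T) (bijections A' T)"
proof (rule bij_betwI[where g = "\<lambda>\<tau>. compose A \<tau> (inv_into A' h)"])
  have h_inv: "bij_betw (inv_into A' h) A A'"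
    using assms by (rule bij_betw_inv_into)
  show "(\<lambda>\<sigma>. compose A' \<sigma> h) \<in> bijections A T \<rightarrow> bijections A' T"
    using assms by (auto simp: bijections_def intro: bij_betw_compose) (auto simp: compose_def bij_betwE)
  show "(\<lambda>\<tau>. compose A \<tau> (inv_into A' h)) \<in> bijections A' T \<rightarrow> bijections A T"
    using h_inv by (auto simp: bijections_def intro: bij_betw_compose) (auto simp: compose_def bij_betwE)
  show "compose A (compose A' \<sigma> h) (inv_into A' h) = \<sigma>" if "\<sigma> \<in> bijections A T" for \<sigma>
    using that assms h_inv
    by (auto simp: bijections_def compose_def bij_betw_inv_into_right fun_eq_iff PiE_def
        extensional_def bij_betwE)
  show "compose A' (compose A \<tau> (inv_into A' h)) h = \<tau>" if "\<tau> \<in> bijections A' T" for \<tau>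
    using that assms
    by (auto simp: bijections_def compose_def bij_betw_inv_into_left fun_eq_iff PiE_def
        extensional_def bij_betwE)
qed

lemma edges_on_Max_Min_in:
  assumes "edges_on E A" and "e \<in> set E"
  shows "Max e \<in> A" and "Min e \<in> A"
proof -
  have "finite e" "e \<noteq> {}" "e \<subseteq> A"
    using assms unfolding edges_on_def by auto
  then show "Max e \<in> A" and "Min e \<in> A"
    using Max_in Min_in by blast+
qed

lemma edges_on_image: "edges_on E A \<Longrightarrow> edges_on (map ((`) h) E) (h ` A)"
  unfolding edges_on_def by auto

lemma sign_prod_cong:
  assumes "edges_on E A" and "\<And>x. x \<in> A \<Longrightarrow> \<sigma> x = \<tau> x"
  shows "sign_prod \<sigma> E = sign_prod \<tau> E"
  unfolding sign_prod_def
proof (rule arg_cong[where f = prod_list], rule map_cong[OF refl])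
  fix e assume "e \<in> set E"
  then show "edge_sign \<sigma> e = edge_sign \<tau> e"
    using edges_on_Max_Min_in[OF assms(1)] assms(2) by (simp add: edge_sign_def)
qed

lemma sign_prod_append: "sign_prod \<sigma> (E @ E') = sign_prod \<sigma> E * sign_prod \<sigma> E'"
  by (simp add: sign_prod_def)

lemma sgn_diff_strict_mono_on:
  assumes "strict_mono_on T h" "x \<in> T" "y \<in> T"
  shows "sgn (int (h x) - int (h y)) = sgn (int x - int y)"
  using assms by (cases x y rule: linorder_cases) (auto simp: strict_mono_on_def)

lemma edge_sign_image:
  assumes "strict_mono h" "finite e" "e \<noteq> {}"
  shows "edge_sign \<sigma> (h ` e) = edge_sign (\<sigma> \<circ> h) e"
  using mono_Max_commute[OF strict_mono_mono[OF assms(1)] assms(2,3)]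
    mono_Min_commute[OF strict_mono_mono[OF assms(1)] assms(2,3)]
  by (simp add: edge_sign_def)

lemma sign_sum_eq_sum_permutes:
  assumes "edges_on E A"
  shows "sign_sum E A A = (\<Sum>\<sigma> \<in> {\<sigma>. \<sigma> permutes A}. sign_prod \<sigma> E)"
  unfolding sign_sum_def
proof (rule sum.reindex_bij_witness[where i = "\<lambda>\<sigma>. restrict \<sigma> A"
      and j = "\<lambda>\<tau> x. if x \<in> A then \<tau> x else x"])
  fix \<tau> assume \<tau>: "\<tau> \<in> bijections A A"
  then show "restrict (\<lambda>x. if x \<in> A then \<tau> x else x) A = \<tau>"
    by (auto simp: bijections_def PiE_def extensional_def)
  have "bij_betw (\<lambda>x. if x \<in> A then \<tau> x else x) A A"
    using \<tau> by (auto simp: bijections_def cong: bij_betw_cong)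
  then show "(\<lambda>x. if x \<in> A then \<tau> x else x) \<in> {\<sigma>. \<sigma> permutes A}"
    by (auto intro!: bij_imp_permutes)
  show "sign_prod (\<lambda>x. if x \<in> A then \<tau> x else x) E = sign_prod \<tau> E"
    using assms by (rule sign_prod_cong) simp
next
  fix \<sigma> assume "\<sigma> \<in> {\<sigma>. \<sigma> permutes A}"
  then have "\<sigma> permutes A" by simp
  then show "(\<lambda>x. if x \<in> A then restrict \<sigma> A x else x) = \<sigma>"
    and "restrict \<sigma> A \<in> bijections A A"
    by (auto simp: permutes_not_in bijections_def permutes_imp_bij permutes_in_image)
qed

lemma sign_sum_relabel_positions:
  assumes "edges_on E A" and "strict_mono_on T h"
  shows "sign_sum E A (h ` T) = sign_sum E A T"
proof -
  have "bij_betw h T (h ` T)"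
    using assms(2) by (simp add: bij_betw_imageI strict_mono_on_imp_inj_on)
  then have "sign_sum E A (h ` T) = (\<Sum>\<sigma>\<in>bijections A T. sign_prod (compose A h \<sigma>) E)"
    unfolding sign_sum_def by (rule sum.reindex_bij_betw[symmetric, OF bijections_compose_left])
  also have "\<dots> = sign_sum E A T"
    unfolding sign_sum_def
  proof (rule sum.cong[OF refl])
    fix \<sigma> assume "\<sigma> \<in> bijections A T"
    then have \<sigma>: "\<sigma> \<in> A \<rightarrow> T"
      by (auto simp: bijections_def)
    have "sign_prod (compose A h \<sigma>) E = sign_prod (h \<circ> \<sigma>) E"
      using assms(1) by (rule sign_prod_cong) (simp add: compose_eq)
    also have "\<dots> = sign_prod \<sigma> E"
      unfolding sign_prod_def
    proof (rule arg_cong[where f = prod_list], rule map_cong[OF refl])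
      fix e assume "e \<in> set E"
      then have "Max e \<in> A" "Min e \<in> A"
        using assms(1) by (auto intro: edges_on_Max_Min_in)
      then show "edge_sign (h \<circ> \<sigma>) e = edge_sign \<sigma> e"
        using \<sigma> sgn_diff_strict_mono_on[OF assms(2)] by (auto simp: edge_sign_def)
    qed
    finally show "sign_prod (compose A h \<sigma>) E = sign_prod \<sigma> E" .
  qed
  finally show ?thesis .
qed

lemma sign_sum_relabel_vertices:
  assumes "edges_on E A" and "strict_mono h"
  shows "sign_sum (map ((`) h) E) (h ` A) T = sign_sum E A T"
proof -
  have "bij_betw h A (h ` A)"
    using assms(2) by (simp add: bij_betw_imageI strict_mono_imp_inj_on inj_on_subset)
  then have "sign_sum E A T = (\<Sum>\<sigma>\<in>bijections (h ` A) T. sign_prod (compose A \<sigma> h) E)"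
    unfolding sign_sum_def by (rule sum.reindex_bij_betw[symmetric, OF bijections_compose_right])
  also have "\<dots> = sign_sum (map ((`) h) E) (h ` A) T"
    unfolding sign_sum_def
  proof (rule sum.cong[OF refl])
    fix \<sigma>
    have "sign_prod (compose A \<sigma> h) E = sign_prod (\<sigma> \<circ> h) E"
      using assms(1) by (rule sign_prod_cong) (simp add: compose_eq)
    also have "\<dots> = sign_prod \<sigma> (map ((`) h) E)"
      using assms unfolding sign_prod_def edges_on_def
      by (auto intro!: arg_cong[where f = prod_list] simp: edge_sign_image)
    finally show "sign_prod (compose A \<sigma> h) E = sign_prod \<sigma> (map ((`) h) E)" .
  qed
  finally show ?thesis by (rule sym)
qed

lemma sign_sum_eq_if_card_eq:
  assumes "edges_on E A" and "finite T" "finite T'" "card T = card T'"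
  shows "sign_sum E A T = sign_sum E A T'"
proof -
  have "sign_sum E A S = sign_sum E A {..<card S}" if "finite S" for S
  proof -
    obtain h where "bij_betw h {..<card S} S" "strict_mono_on {..<card S} h"
      using ex_bij_betw_strict_mono_card[OF \<open>finite S\<close>] .
    then show ?thesis
      using sign_sum_relabel_positions[OF assms(1)] by (metis bij_betw_imp_surj_on)
  qed
  then show ?thesis
    using assms(2-4) by metis
qed

lemma restrict_in_bijections_image:
  assumes "A \<inter> B = {}" and "\<sigma> \<in> bijections (A \<union> B) T"
  shows "restrict \<sigma> A \<in> bijections A (\<sigma> ` A)" and "restrict \<sigma> B \<in> bijections B (T - \<sigma> ` A)"
proof -
  have \<sigma>: "inj_on \<sigma> (A \<union> B)" "\<sigma> ` (A \<union> B) = T"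
    using assms(2) by (auto simp: bijections_def bij_betw_def)
  have "\<sigma> ` A \<inter> \<sigma> ` B = {}"
    using inj_on_image_Int[OF \<sigma>(1), of A B] assms(1) by simp
  then have "\<sigma> ` B = T - \<sigma> ` A"
    using \<sigma>(2) by blast
  moreover have "inj_on \<sigma> A" "inj_on \<sigma> B"
    using \<sigma>(1) by (auto intro: inj_on_subset)
  ultimately show "restrict \<sigma> A \<in> bijections A (\<sigma> ` A)"
    and "restrict \<sigma> B \<in> bijections B (T - \<sigma> ` A)"
    by (auto simp: bijections_def bij_betw_def)
qed

lemma join_in_bijections:
  assumes "A \<inter> B = {}" and "S \<subseteq> T" and f: "f \<in> bijections A S" and g: "g \<in> bijections B (T - S)"
  shows "(\<lambda>x. if x \<in> A then f x else g x) \<in> bijections (A \<union> B) T"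
proof -
  let ?m = "\<lambda>x. if x \<in> A then f x else g x"
  have "bij_betw ?m A S"
    using f by (auto simp: bijections_def cong: bij_betw_cong)
  moreover have "bij_betw ?m B (T - S)"
  proof (rule bij_betw_cong[THEN iffD2])
    show "bij_betw g B (T - S)"
      using g by (simp add: bijections_def)
  qed (use assms(1) in auto)
  ultimately have "bij_betw ?m (A \<union> B) (S \<union> (T - S))"
    by (rule bij_betw_combine) auto
  moreover have "?m \<in> A \<union> B \<rightarrow>\<^sub>E T"
    using assms(2) f g by (auto simp: bijections_def PiE_def Pi_iff extensional_def)
  ultimately show ?thesis
    using assms(2) by (simp add: bijections_def Un_absorb1)
qed

lemma bijections_split:
  assumes "A \<inter> B = {}"
  shows "bij_betw (\<lambda>\<sigma>. (\<sigma> ` A, restrict \<sigma> A, restrict \<sigma> B)) (bijections (A \<union> B) T)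
           (SIGMA S:{S. S \<subseteq> T \<and> card S = card A}. bijections A S \<times> bijections B (T - S))"
proof (rule bij_betwI[where g = "\<lambda>(S, f, g) x. if x \<in> A then f x else g x"])
  show "(\<lambda>\<sigma>. (\<sigma> ` A, restrict \<sigma> A, restrict \<sigma> B)) \<in> bijections (A \<union> B) T \<rightarrow>
      (SIGMA S:{S. S \<subseteq> T \<and> card S = card A}. bijections A S \<times> bijections B (T - S))"
  proof
    fix \<sigma> assume \<sigma>: "\<sigma> \<in> bijections (A \<union> B) T"
    have "bij_betw (restrict \<sigma> A) A (\<sigma> ` A)"
      using restrict_in_bijections_image(1)[OF assms \<sigma>] by (simp add: bijections_def)
    then have "card (\<sigma> ` A) = card A"
      by (simp add: bij_betw_same_card)
    moreover have "\<sigma> ` A \<subseteq> T"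
      using \<sigma> by (auto simp: bijections_def bij_betw_def)
    ultimately show "(\<sigma> ` A, restrict \<sigma> A, restrict \<sigma> B) \<in>
        (SIGMA S:{S. S \<subseteq> T \<and> card S = card A}. bijections A S \<times> bijections B (T - S))"
      using restrict_in_bijections_image[OF assms \<sigma>] by simp
  qed
  show "(\<lambda>(S, f, g) x. if x \<in> A then f x else g x) \<in>
      (SIGMA S:{S. S \<subseteq> T \<and> card S = card A}. bijections A S \<times> bijections B (T - S)) \<rightarrow>
      bijections (A \<union> B) T"
    using join_in_bijections[OF assms] by auto
  show "(\<lambda>(S, f, g) x. if x \<in> A then f x else g x) (\<sigma> ` A, restrict \<sigma> A, restrict \<sigma> B) = \<sigma>"
    if "\<sigma> \<in> bijections (A \<union> B) T" for \<sigma>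
  proof -
    have "\<sigma> \<in> A \<union> B \<rightarrow>\<^sub>E T"
      using that by (simp add: bijections_def)
    then have "\<sigma> x = undefined" if "x \<notin> A \<union> B" for x
      using that by (rule PiE_arb)
    then show ?thesis
      by (auto simp: fun_eq_iff)
  qed
  show "(\<lambda>\<sigma>. (\<sigma> ` A, restrict \<sigma> A, restrict \<sigma> B)) ((\<lambda>(S, f, g) x. if x \<in> A then f x else g x) q) = q"
    if "q \<in> (SIGMA S:{S. S \<subseteq> T \<and> card S = card A}. bijections A S \<times> bijections B (T - S))"
    for q
  proof -
    obtain S f g where q: "q = (S, f, g)"
      by (metis prod.collapse)
    then have f: "f \<in> bijections A S" and g: "g \<in> bijections B (T - S)"
      using that by auto
    have "f ` A = S"
      using f by (simp add: bijections_def bij_betw_def)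
    then show ?thesis
      using q f g assms
      by (auto simp: bijections_def PiE_def extensional_def fun_eq_iff image_def)
  qed
qed

lemma sign_sum_append:
  assumes "A \<inter> B = {}" "finite A" "finite B" "finite T"
    and "edges_on EA A" "edges_on EB B"
  shows "sign_sum (EA @ EB) (A \<union> B) T =
    (\<Sum>S | S \<subseteq> T \<and> card S = card A. sign_sum EA A S * sign_sum EB B (T - S))"
proof -
  let ?SS = "{S. S \<subseteq> T \<and> card S = card A}"
  let ?X = "SIGMA S:?SS. bijections A S \<times> bijections B (T - S)"
  have "sign_sum (EA @ EB) (A \<union> B) T =
      (\<Sum>\<sigma>\<in>bijections (A \<union> B) T. sign_prod (restrict \<sigma> A) EA * sign_prod (restrict \<sigma> B) EB)"
  proof -
    have "sign_prod \<sigma> EA = sign_prod (restrict \<sigma> A) EA" "sign_prod \<sigma> EB = sign_prod (restrict \<sigma> B) EB"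
      for \<sigma>
      by (rule sign_prod_cong[OF assms(5)], simp, rule sign_prod_cong[OF assms(6)], simp)
    then show ?thesis
      by (simp add: sign_sum_def sign_prod_append)
  qed
  also have "\<dots> = (\<Sum>(S, f, g)\<in>?X. sign_prod f EA * sign_prod g EB)"
    using sum.reindex_bij_betw[OF bijections_split[OF assms(1)],
        of "\<lambda>(S, f, g). sign_prod f EA * sign_prod g EB"]
    by simp
  also have "\<dots> = (\<Sum>S\<in>?SS. \<Sum>(f, g)\<in>bijections A S \<times> bijections B (T - S).
                      sign_prod f EA * sign_prod g EB)"
  proof (rule sum.Sigma[symmetric])
    show "finite ?SS"
      using assms(4) by (rule finite_subset[rotated, OF finite_Pow_iff[THEN iffD2]]) auto
    show "\<forall>S\<in>?SS. finite (bijections A S \<times> bijections B (T - S))"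
      using assms(2-4) by (auto intro!: finite_bijections intro: finite_subset)
  qed
  also have "\<dots> = (\<Sum>S\<in>?SS. sign_sum EA A S * sign_sum EB B (T - S))"
    by (simp add: sign_sum_def sum_product sum.cartesian_product)
  finally show ?thesis .
qed

lemma edges_on_if_wf_lgraph: "wf_lgraph G \<Longrightarrow> edges_on (edges G) {1..nverts G}"
  unfolding wf_lgraph_def edges_on_def by (auto intro: card_ge_0_finite)

lemma cG_eq_sign_sum:
  assumes "wf_lgraph G"
  shows "cG G = sign_sum (edges G) {1..nverts G} {1..nverts G}"
  using sign_sum_eq_sum_permutes[OF edges_on_if_wf_lgraph[OF assms]] by (simp add: cG_def sign_prod_def)

lemma sign_sum_wf_lgraph:
  assumes "wf_lgraph G" and "finite S" "card S = nverts G"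
  shows "sign_sum (edges G) {1..nverts G} S = cG G"
proof -
  have "sign_sum (edges G) {1..nverts G} S = sign_sum (edges G) {1..nverts G} {1..nverts G}"
    by (rule sign_sum_eq_if_card_eq[OF edges_on_if_wf_lgraph[OF assms(1)]]) (use assms in auto)
  then show ?thesis
    using cG_eq_sign_sum[OF assms(1)] by simp
qed

lemma dunion_Cons: "dunion (G # Gs) = dunion [G, dunion Gs]"
  by (simp add: nverts_def edges_def)

lemma nverts_dunion: "nverts (dunion Gs) = (\<Sum>G\<leftarrow>Gs. nverts G)"
  by (induction Gs) (simp_all add: nverts_def)

lemma shift_atLeastAtMost: "(\<lambda>v. v + a) ` {1..m} = {a + 1..a + m :: nat}"
  by (simp add: add.commute[of _ a])

lemma wf_lgraph_dunion_pair:
  assumes "wf_lgraph G" "wf_lgraph D"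
  shows "wf_lgraph (dunion [G, D])"
proof -
  have "card ((\<lambda>v. v + nverts G) ` e) = 2" "(\<lambda>v. v + nverts G) ` e \<subseteq> {1..nverts G + nverts D}"
    if "e \<in> set (edges D)" for e
  proof -
    have "card e = 2" "e \<subseteq> {1..nverts D}"
      using that assms(2) by (auto simp: wf_lgraph_def)
    then have "(\<lambda>v. v + nverts G) ` e \<subseteq> {nverts G + 1..nverts G + nverts D}"
      using shift_atLeastAtMost by (metis image_mono)
    then show "(\<lambda>v. v + nverts G) ` e \<subseteq> {1..nverts G + nverts D}"
      by auto
    show "card ((\<lambda>v. v + nverts G) ` e) = 2"
      using \<open>card e = 2\<close> by (simp add: card_image)
  qed
  then show ?thesis
    using assms(1) by (fastforce simp: wf_lgraph_def nverts_def edges_def)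
qed

lemma wf_lgraph_dunion: "\<forall>G\<in>set Gs. wf_lgraph G \<Longrightarrow> wf_lgraph (dunion Gs)"
proof (induction Gs)
  case Nil
  then show ?case by (simp add: wf_lgraph_def edges_def)
next
  case (Cons G Gs)
  then have "wf_lgraph (dunion [G, dunion Gs])"
    by (intro wf_lgraph_dunion_pair) auto
  then show ?case
    unfolding dunion_Cons[of G Gs] .
qed

lemma cG_dunion_pair:
  assumes G: "wf_lgraph G" and D: "wf_lgraph D"
  shows "cG (dunion [G, D]) = int ((nverts G + nverts D) choose nverts G) * cG G * cG D"
proof -
  define a m where "a = nverts G" and "m = nverts D"
  define shift where "shift = (\<lambda>v. v + a)"
  define B where "B = shift ` {1..m}"
  define T where "T = {1..a + m}"
  have EG: "edges_on (edges G) {1..a}" and ED: "edges_on (edges D) {1..m}"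
    unfolding a_def m_def using G D by (simp_all only: edges_on_if_wf_lgraph)
  have mono_shift: "strict_mono shift"
    by (simp add: shift_def strict_mono_def)
  have B: "B = {a + 1..a + m}"
    unfolding B_def shift_def by (rule shift_atLeastAtMost)
  have U: "dunion [G, D] = (a + m, edges G @ map ((`) shift) (edges D))"
    by (simp add: a_def m_def shift_def nverts_def edges_def)
  have "{1..a} \<union> B = T"
    unfolding B T_def by auto
  then have "cG (dunion [G, D]) = sign_sum (edges G @ map ((`) shift) (edges D)) ({1..a} \<union> B) T"
    using cG_eq_sign_sum[OF wf_lgraph_dunion_pair[OF G D]]
    unfolding U by (simp add: nverts_def edges_def T_def)
  also have "\<dots> = (\<Sum>S | S \<subseteq> T \<and> card S = a.
      sign_sum (edges G) {1..a} S * sign_sum (map ((`) shift) (edges D)) B (T - S))"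
    using sign_sum_append[of "{1..a}" B T "edges G" "map ((`) shift) (edges D)"]
      EG edges_on_image[OF ED, of shift, folded B_def] by (simp add: B T_def)
  also have "\<dots> = (\<Sum>S | S \<subseteq> T \<and> card S = a. cG G * cG D)"
  proof (rule sum.cong[OF refl])
    fix S assume "S \<in> {S. S \<subseteq> T \<and> card S = a}"
    then have "S \<subseteq> T" and "card S = a"
      by auto
    moreover have "finite S"
      using \<open>S \<subseteq> T\<close> unfolding T_def by (rule finite_subset) simp
    ultimately have S: "finite S" "card S = a" "finite (T - S)" "card (T - S) = m"
      by (simp_all add: card_Diff_subset T_def)
    have G_factor: "sign_sum (edges G) {1..a} S = cG G"
      unfolding a_def using G S by (intro sign_sum_wf_lgraph) (simp_all add: a_def)
    have "sign_sum (map ((`) shift) (edges D)) B (T - S) = sign_sum (edges D) {1..m} (T - S)"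
      unfolding B_def by (rule sign_sum_relabel_vertices[OF ED mono_shift])
    also have "\<dots> = cG D"
      unfolding m_def using D S by (intro sign_sum_wf_lgraph) (simp_all add: m_def)
    finally have D_factor: "sign_sum (map ((`) shift) (edges D)) B (T - S) = cG D" .
    show "sign_sum (edges G) {1..a} S * sign_sum (map ((`) shift) (edges D)) B (T - S)
        = cG G * cG D"
      by (simp only: G_factor D_factor)
  qed
  also have "\<dots> = int ((a + m) choose a) * cG G * cG D"
    by (simp add: n_subsets T_def)
  finally show ?thesis
    by (simp add: a_def m_def)
qed

lemma cG_dunion_mult_fact:
  assumes "\<forall>G\<in>set Gs. wf_lgraph G"
  shows "cG (dunion Gs) * (\<Prod>G\<leftarrow>Gs. fact (nverts G)) = fact (\<Sum>G\<leftarrow>Gs. nverts G) * (\<Prod>G\<leftarrow>Gs. cG G)"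
  using assms
proof (induction Gs)
  case Nil
  have "{\<sigma>. \<sigma> permutes {1..0::nat}} = {id}"
    by auto
  then show ?case
    by (simp add: cG_def nverts_def edges_def)
next
  case (Cons G Gs)
  define a m where "a = nverts G" and "m = (\<Sum>G\<leftarrow>Gs. nverts G)"
  have binomial: "fact a * fact m * int ((a + m) choose a) = fact (a + m)"
    using binomial_fact_lemma[of a "a + m"] by (metis add_diff_cancel_left' le_add1 of_nat_fact of_nat_mult)
  have "cG (dunion (G # Gs)) = int ((a + m) choose a) * cG G * cG (dunion Gs)"
    unfolding dunion_Cons[of G Gs] a_def m_def nverts_dunion[symmetric]
    using Cons.prems by (intro cG_dunion_pair wf_lgraph_dunion) auto
  then have "cG (dunion (G # Gs)) * (\<Prod>G\<leftarrow>G # Gs. fact (nverts G))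
      = int ((a + m) choose a) * fact a * cG G * (cG (dunion Gs) * (\<Prod>G\<leftarrow>Gs. fact (nverts G)))"
    by (simp add: a_def)
  also have "\<dots> = fact a * fact m * int ((a + m) choose a) * (cG G * (\<Prod>G\<leftarrow>Gs. cG G))"
    using Cons by (simp add: m_def)
  also have "\<dots> = fact (a + m) * (cG G * (\<Prod>G\<leftarrow>Gs. cG G))"
    by (simp only: binomial)
  also have "\<dots> = fact (\<Sum>G\<leftarrow>G # Gs. nverts G) * (\<Prod>G\<leftarrow>G # Gs. cG G)"
    by (simp add: a_def m_def)
  finally show ?case .
qed

theorem mainTheorem9:
  fixes Gs :: "lgraph list"
  assumes "\<forall>G\<in>set Gs. wf_lgraph G"
    and "distinct Gs"
  shows "real_of_int (cG (dunion Gs)) =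
           fact (\<Sum>G\<leftarrow>Gs. nverts G) / (\<Prod>G\<leftarrow>Gs. fact (nverts G))
           * (\<Prod>G\<leftarrow>Gs. real_of_int (cG G))"
proof -
  have of_int_prods: "real_of_int (\<Prod>G\<leftarrow>Gs. f G) = (\<Prod>G\<leftarrow>Gs. real_of_int (f G))" for f
    by (induction Gs) simp_all
  have "real_of_int (cG (dunion Gs)) * (\<Prod>G\<leftarrow>Gs. fact (nverts G))
      = fact (\<Sum>G\<leftarrow>Gs. nverts G) * (\<Prod>G\<leftarrow>Gs. real_of_int (cG G))"
    using arg_cong[OF cG_dunion_mult_fact[OF assms(1)], of real_of_int]
    by (simp add: of_int_prods)
  moreover have "(\<Prod>G\<leftarrow>Gs. fact (nverts G) :: real) \<noteq> 0"
    by (auto simp: prod_list_zero_iff)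
  ultimately show ?thesis
    by (simp add: field_simps)
qed

end
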